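(* Let $N=2$ with $Q=\{A,B\}$. For every $k>4L$, every window string $\vec n=(n_1,\dots,n_k)$ with $L\ge n_1\ge\cdots\ge n_k\ge1$, every $\vec q\in Q^k$ and every $\mu\in\{0,1\}^{k-1}$, the string $\vec n$ contains five equal consecutive entries $n_{i-2}=\cdots=n_{i+2}$, and consequently there exist $\vec n'$ (of length $k-2$, obtained from $\vec n$ by deleting two of these five entries), $\vec q'\in Q^{k-2}$, $\mu'\in\{0,1\}^{k-3}$ and a scalar $c$ independent of $U_1,\dots,U_L$ and $\tilde O$ with $\mathbf{T}^{(k)}_{\vec q;\mu}(\vec n)=c\,\mathbf{T}^{(k-2)}_{\vec q';\mu'}(\vec n')$. In particular all two-qubit control tensors reduce to those of order at most $4L$.
   Context: Fix integers $L\ge 1$ and $N\ge 1$, and a set $Q$ of $N$ qubit labels. For $q\in Q$ let $\sigma_z^{[q]}$ denote the Pauli-$Z$ operator acting on qubit $q$ tensored with the identity on all other qubits of $(\mathbb{C}^2)^{\otimes N}$. (Digital control) Let $U_1,\dots,U_L$ be arbitrary unitaries on $(\mathbb{C}^2)^{\otimes N}$ ($U_n$ is the control propagator, constant on the $n$-th time window), and let $\tilde O$ be an arbitrary Hermitian unitary operator on $(\mathbb{C}^2)^{\otimes N}$ (the toggling-frame observable). For $q\in Q$ and $n\in\{1,\dots,L\}$ define $\tilde h_q(n)=U_n^\dagger\sigma_z^{[q]}U_n$ and $\bar h_q(n)=-\tilde O^{-1}\tilde h_q(n)\tilde O$. For $k\ge1$, a window string $\vec n=(n_1,\dots,n_k)$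 with $L\ge n_1\ge\cdots\ge n_k\ge1$, a qubit string $\vec q=(q_1,\dots,q_k)\in Q^k$ and a sign string $\mu\in\{0,1\}^{k-1}$, the (window-framed) control tensor is $$\mathbf{T}^{(k)}_{\vec q;\mu}(\vec n)=\sum_{b\in\{0,1\}^k}(-1)^{\sum_{j=1}^{k-1}\mu_j b_{j+1}}\Big(\prod^{\downarrow}_{i:\,b_i=1}\bar h_{q_i}(n_i)\Big)\Big(\prod^{\uparrow}_{i:\,b_i=0}\tilde h_{q_i}(n_i)\Big),$$ where $\prod^{\downarrow}$ is the ordered product with the index $i$ decreasing from left to right, $\prod^{\uparrow}$ is the ordered product with $i$ increasing from left to right, and an empty product is the identity. When $N=1$ the qubit string is omitted and we write $\mathbf{T}^{(k)}_{\mu}(\vec n)$. *)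

theory Defs
  imports "HOL-Analysis.Analysis"
begin

text \<open>Two-qubit operators: complex matrices indexed by the computational basis
  (a, b) of C^2 (x) C^2, where the first component is qubit A and the second qubit B
  (False = |0>, True = |1>).\<close>

type_synonym cmat2 = "complex ^ (bool \<times> bool) ^ (bool \<times> bool)"

datatype qubit = QA | QB

definition adj :: "cmat2 \<Rightarrow> cmat2" where
  "adj M = (\<chi> i j. cnj (M $ j $ i))"

definition unitary :: "cmat2 \<Rightarrow> bool" where
  "unitary M \<longleftrightarrow> adj M ** M = mat 1 \<and> M ** adj M = mat 1"

definition hermitian :: "cmat2 \<Rightarrow> bool" where
  "hermitian M \<longleftrightarrow> adj M = M"

definition sigz :: "qubit \<Rightarrow> cmat2" where
  "sigz q = (\<chi> i j. if i = j then
       (if (case q of QA \<Rightarrow> fst i | QB \<Rightarrow> snd i) then -1 else 1) else 0)"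

definition htil :: "(nat \<Rightarrow> cmat2) \<Rightarrow> qubit \<Rightarrow> nat \<Rightarrow> cmat2" where
  "htil U q n = adj (U n) ** sigz q ** U n"

definition hbar :: "(nat \<Rightarrow> cmat2) \<Rightarrow> cmat2 \<Rightarrow> qubit \<Rightarrow> nat \<Rightarrow> cmat2" where
  "hbar U Ot q n = - (matrix_inv Ot ** htil U q n ** Ot)"

definition cscale :: "complex \<Rightarrow> cmat2 \<Rightarrow> cmat2" where
  "cscale c M = (\<chi> i j. c * M $ i $ j)"

definition mprod :: "cmat2 list \<Rightarrow> cmat2" where
  "mprod Ms = foldr (**) Ms (mat 1)"

text \<open>Control tensor T^{(k)}_{qs;mu}(ns); lists are 0-indexed, so n_i = ns!(i-1) etc.
  Bit strings b range over {0,1}^k; the sign is (-1)^(sum_{j=1}^{k-1} mu_j b_{j+1}).\<close>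
definition ctensor :: "(nat \<Rightarrow> cmat2) \<Rightarrow> cmat2 \<Rightarrow> nat list \<Rightarrow> qubit list \<Rightarrow> nat list \<Rightarrow> cmat2" where
  "ctensor U Ot ns qs mu =
     (\<Sum>b\<in>{b. length b = length ns \<and> set b \<subseteq> {0,1}}.
        cscale ((-1::complex) ^ (\<Sum>j<length ns - 1. mu ! j * b ! (j + 1)))
          (mprod (map (\<lambda>i. hbar U Ot (qs ! i) (ns ! i))
                   (rev (filter (\<lambda>i. b ! i = 1) [0..<length ns])))
           ** mprod (map (\<lambda>i. htil U (qs ! i) (ns ! i))
                   (filter (\<lambda>i. b ! i = 0) [0..<length ns]))))"

end

(*
  Reading the bit string b from left to right, the sum defining the control tensor is the
  image of the identity under the composite of the steps  X \<mapsto> X h~ + (-1)^m h^ X,  one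
  per entry (n_j, q_j), where h~ = h~_(q_j)(n_j), h^ = h^_(q_j)(n_j) and m = mu_(j-1) is the
  sign bit attached to b_j (m = 0 for j = 1).  Within one window n the operators h~_q(n), and
  likewise h^_q(n), are commuting involutions, being conjugates of the Pauli-Z operators;
  hence the steps of one window commute, two steps on the same qubit with opposite signs
  annihilate, and a step S occurring three times satisfies S^3 = 4 S.  Five steps of one
  window on two qubits always exhibit one of the last two situations, and a non-increasing
  string of length k > 4L with entries in {1..L} contains five equal consecutive entries.
*)

theory Submission
  imports Defs
begin

lemma matrix_add_rdistrib: "(B + C) ** A = B ** A + C ** A"
  by (vector matrix_matrix_mult_def sum.distrib[symmetric] field_simps)

lemma matrix_sum_mult: "sum f S ** (M::cmat2) = (\<Sum>i\<in>S. f i ** M)"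
  by (induction S rule: infinite_finite_induct) (auto simp: matrix_add_rdistrib)

lemma matrix_mult_sum: "(M::cmat2) ** sum f S = (\<Sum>i\<in>S. M ** f i)"
  by (induction S rule: infinite_finite_induct) (auto simp: matrix_add_ldistrib)

lemma matrix_mult_uminus_left [simp]: "(- A) ** B = - (A ** B :: cmat2)"
  unfolding matrix_matrix_mult_def by (vector sum_negf)

lemma matrix_mult_uminus_right [simp]: "A ** (- B) = - (A ** B :: cmat2)"
  unfolding matrix_matrix_mult_def by (vector sum_negf)

lemma cscale_mult_left [simp]: "cscale c A ** B = cscale c (A ** B)"
  unfolding cscale_def matrix_matrix_mult_def by (vector sum_distrib_left mult.assoc)

lemma cscale_mult_right [simp]: "A ** cscale c B = cscale c (A ** B)"
  unfolding cscale_def matrix_matrix_mult_def by (vector sum_distrib_left mult.left_commute)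

lemma cscale_add [simp]: "cscale c (A + B) = cscale c A + cscale c B"
  unfolding cscale_def by (vector distrib_left)

lemma cscale_cscale [simp]: "cscale c (cscale d A) = cscale (c * d) A"
  unfolding cscale_def by (vector mult.assoc)

lemma cscale_1 [simp]: "cscale 1 A = A"
  unfolding cscale_def by vector

lemma cscale_0 [simp]: "cscale 0 A = 0"
  unfolding cscale_def by vector

lemma cscale_zero [simp]: "cscale c 0 = 0"
  unfolding cscale_def by vector

lemma cscale_sum: "cscale c (sum f S) = (\<Sum>i\<in>S. cscale c (f i))"
  by (induction S rule: infinite_finite_induct) auto

lemma cscale_nth [simp]: "cscale c A $ i $ j = c * A $ i $ j"
  unfolding cscale_def by simp

section \<open>The elementary step of the control tensor\<close>

definition sign_step :: "cmat2 \<Rightarrow> cmat2 \<Rightarrow> nat \<Rightarrow> cmat2 \<Rightarrow> cmat2" where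
  "sign_step A R m X = X ** R + cscale ((-1) ^ m) (A ** X)"

lemma sign_step_cscale: "sign_step A R m (cscale c X) = cscale c (sign_step A R m X)"
  unfolding sign_step_def by (simp add: mult.commute)

lemma sign_step_twice:
  "sign_step A R m (sign_step A' R' m' X) =
     X ** (R' ** R) + cscale ((-1) ^ m') (A' ** X ** R) + cscale ((-1) ^ m) (A ** X ** R')
     + cscale ((-1) ^ (m + m')) ((A ** A') ** X)"
  unfolding sign_step_def
  by (simp add: matrix_add_rdistrib matrix_add_ldistrib matrix_mul_assoc power_add add_ac)

lemma sign_step_commute:
  assumes "A ** A' = A' ** A" and "R ** R' = R' ** R"
  shows "sign_step A R m \<circ> sign_step A' R' m' = sign_step A' R' m' \<circ> sign_step A R m"
  by (rule ext) (simp add: sign_step_twice assms add_ac)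

lemma sign_step_annihilate:
  assumes "A ** A = mat 1" and "R ** R = mat 1" and "odd (m + m')"
  shows "sign_step A R m (sign_step A R m' X) = 0"
proof -
  have "(-1::complex) ^ (m + m') = -1" and "(-1::complex) ^ m = - ((-1) ^ m')"
    using assms(3) by (auto simp: power_add elim: oddE)
  then show ?thesis
    by (simp add: sign_step_twice assms vec_eq_iff algebra_simps)
qed

lemma sign_step_cube:
  assumes "A ** A = mat 1" and "R ** R = mat 1"
  shows "sign_step A R m (sign_step A R m (sign_step A R m X)) = cscale 4 (sign_step A R m X)"
proof -
  have sq: "(-1::complex) ^ m * (-1) ^ m = 1"
    by (simp add: power_mult_distrib[symmetric])
  have cancel: "A ** A ** Y = Y" "Y ** R ** R = Y" for Y
    by (simp_all add: assms matrix_mul_assoc[symmetric])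
  have twice: "sign_step A R m (sign_step A R m Y) = cscale 2 (Y + cscale ((-1) ^ m) (A ** Y ** R))" for Y
    by (simp add: sign_step_twice assms power_add sq vec_eq_iff algebra_simps)
  show ?thesis
    unfolding twice unfolding sign_step_def
    by (simp add: matrix_add_rdistrib matrix_add_ldistrib matrix_mul_assoc cancel sq vec_eq_iff algebra_simps)
qed

section \<open>Commuting involutions\<close>

lemma matrix_inv_unitary:
  assumes "unitary A"
  shows "A ** matrix_inv A = mat 1" and "matrix_inv A ** A = mat 1"
proof -
  have "\<exists>A'. A ** A' = mat 1 \<and> A' ** A = mat 1"
    using assms unfolding unitary_def by blast
  then have "A ** matrix_inv A = mat 1 \<and> matrix_inv A ** A = mat 1"
    unfolding matrix_inv_def by (rule someI_ex)
  then show "A ** matrix_inv A = mat 1" and "matrix_inv A ** A = mat 1" by auto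
qed

definition commuting_involutions :: "('i \<Rightarrow> cmat2) \<Rightarrow> bool" where
  "commuting_involutions h \<longleftrightarrow> (\<forall>p. h p ** h p = mat 1) \<and> (\<forall>p q. h p ** h q = h q ** h p)"

lemma sigz_mult: "sigz p ** sigz q = (\<chi> i j. if i = j then sigz p $ i $ i * sigz q $ i $ i else 0)"
proof -
  have "(\<Sum>k\<in>UNIV. sigz p $ i $ k * sigz q $ k $ j) = (if i = j then sigz p $ i $ i * sigz q $ i $ i else 0)"
    for i j
  proof -
    have "(\<Sum>k\<in>UNIV. sigz p $ i $ k * sigz q $ k $ j) =
          (\<Sum>k\<in>UNIV. if k = i then sigz p $ i $ i * sigz q $ i $ j else 0)"
      by (rule sum.cong) (auto simp: sigz_def)
    also have "\<dots> = sigz p $ i $ i * sigz q $ i $ j"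
      by simp
    also have "\<dots> = (if i = j then sigz p $ i $ i * sigz q $ i $ i else 0)"
      by (cases "i = j") (simp_all add: sigz_def)
    finally show ?thesis .
  qed
  then show ?thesis unfolding matrix_matrix_mult_def by (simp add: vec_eq_iff)
qed

lemma commuting_involutions_sigz: "commuting_involutions sigz"
  unfolding commuting_involutions_def sigz_mult by (simp add: sigz_def mat_def vec_eq_iff)

lemma commuting_involutions_conj:
  assumes "V ** W = mat 1" and "W ** V = mat 1" and "commuting_involutions h"
  shows "commuting_involutions (\<lambda>q. W ** h q ** V)"
proof -
  have conj_mult: "(W ** h p ** V) ** (W ** h q ** V) = W ** (h p ** h q) ** V" for p q
  proof -
    have "(W ** h p ** V) ** (W ** h q ** V) = W ** h p ** (V ** W) ** h q ** V"
      by (simp add: matrix_mul_assoc)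
    also have "\<dots> = W ** (h p ** h q) ** V"
      by (simp add: assms(1) matrix_mul_assoc)
    finally show ?thesis .
  qed
  show ?thesis
    using assms(3) unfolding commuting_involutions_def conj_mult by (simp add: assms(2))
qed

lemma commuting_involutions_uminus: "commuting_involutions h \<Longrightarrow> commuting_involutions (\<lambda>q. - h q)"
  unfolding commuting_involutions_def by simp

lemma commuting_involutions_htil:
  assumes "unitary (U n)"
  shows "commuting_involutions (\<lambda>q. htil U q n)"
  unfolding htil_def
proof (rule commuting_involutions_conj[OF _ _ commuting_involutions_sigz])
  show "U n ** adj (U n) = mat 1" and "adj (U n) ** U n = mat 1"
    using assms unfolding unitary_def by auto
qed

lemma commuting_involutions_hbar:
  assumes "unitary (U n)" and "unitary Ot"
  shows "commuting_involutions (\<lambda>q. hbar U Ot q n)"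
  unfolding hbar_def
  using commuting_involutions_conj[OF matrix_inv_unitary[OF assms(2)] commuting_involutions_htil[of U n, OF assms(1)]]
  by (rule commuting_involutions_uminus)

section \<open>The control tensor as a product of steps\<close>

definition bitstrings :: "nat \<Rightarrow> nat list set" where
  "bitstrings k = {b. length b = k \<and> set b \<subseteq> {0, 1}}"

lemma bitstrings_Suc: "bitstrings (Suc k) = (\<lambda>(b, x). b @ [x]) ` (bitstrings k \<times> {0, 1})"
proof
  show "bitstrings (Suc k) \<subseteq> (\<lambda>(b, x). b @ [x]) ` (bitstrings k \<times> {0, 1})"
  proof
    fix b assume b: "b \<in> bitstrings (Suc k)"
    then have "b \<noteq> []"
      unfolding bitstrings_def by auto
    then have "b = butlast b @ [last b]"
      by simp
    moreover have "butlast b \<in> bitstrings k" and "last b \<in> {0, 1}"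
      using b last_in_set[OF \<open>b \<noteq> []\<close>] unfolding bitstrings_def by (auto dest: in_set_butlastD)
    ultimately show "b \<in> (\<lambda>(b, x). b @ [x]) ` (bitstrings k \<times> {0, 1})"
      by (metis (no_types, lifting) SigmaI case_prod_conv image_eqI)
  qed
qed (auto simp: bitstrings_def)

definition ctensor_sum :: "(nat \<Rightarrow> cmat2) \<Rightarrow> (nat \<Rightarrow> cmat2) \<Rightarrow> nat list \<Rightarrow> nat \<Rightarrow> cmat2" where
  "ctensor_sum A R mu k = (\<Sum>b\<in>bitstrings k.
     cscale ((-1) ^ (\<Sum>j<k - 1. mu ! j * b ! (j + 1)))
       (mprod (map A (rev (filter (\<lambda>i. b ! i = 1) [0..<k])))
        ** mprod (map R (filter (\<lambda>i. b ! i = 0) [0..<k]))))"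

lemma ctensor_eq_ctensor_sum:
  "ctensor U Ot ns qs mu =
     ctensor_sum (\<lambda>i. hbar U Ot (qs ! i) (ns ! i)) (\<lambda>i. htil U (qs ! i) (ns ! i)) mu (length ns)"
  unfolding ctensor_def ctensor_sum_def bitstrings_def by simp

lemma mprod_append: "mprod (xs @ ys) = mprod xs ** mprod ys"
  unfolding mprod_def by (induction xs) (simp_all add: matrix_mul_assoc)

lemma mprod_Nil [simp]: "mprod [] = mat 1"
  unfolding mprod_def by simp

lemma mprod_Cons: "mprod (A # As) = A ** mprod As"
  unfolding mprod_def by simp

lemma filter_upt_snoc:
  assumes "length b = k"
  shows "filter (\<lambda>i. (b @ [x]) ! i = v) [0..<Suc k] = filter (\<lambda>i. b ! i = v) [0..<k] @ (if x = v then [k] else [])"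
proof -
  have "filter (\<lambda>i. (b @ [x]) ! i = v) [0..<k] = filter (\<lambda>i. b ! i = v) [0..<k]"
    by (rule filter_cong) (auto simp: nth_append assms)
  then show ?thesis using assms by (simp add: nth_append)
qed

lemma sign_exponent_snoc:
  assumes "length b = k"
  shows "(\<Sum>j<Suc k - 1. mu ! j * (b @ [x]) ! (j + 1)) =
    (\<Sum>j<k - 1. mu ! j * b ! (j + 1)) + (if k = 0 then 0 else mu ! (k - 1) * x)"
proof (cases k)
  case (Suc k')
  have "(\<Sum>j<k'. mu ! j * (b @ [x]) ! (j + 1)) = (\<Sum>j<k'. mu ! j * b ! (j + 1))"
    by (rule sum.cong) (auto simp: nth_append assms Suc)
  then show ?thesis using assms Suc by (simp add: nth_append)
qed simp

text \<open>Appending a bit 0 multiplies the summand on the right by R k; appending a bit 1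
  multiplies it on the left by A k, with the extra sign (-1)^(mu_(k-1)).\<close>

lemma ctensor_sum_Suc:
  "ctensor_sum A R mu (Suc k) = sign_step (A k) (R k) ((0 # mu) ! k) (ctensor_sum A R mu k)"
proof -
  define F where "F k b = cscale ((-1::complex) ^ (\<Sum>j<k - 1. mu ! j * b ! (j + 1)))
     (mprod (map A (rev (filter (\<lambda>i. b ! i = 1) [0..<k])))
      ** mprod (map R (filter (\<lambda>i. b ! i = 0) [0..<k])))" for k b
  define s where "s = (-1::complex) ^ ((0 # mu) ! k)"
  have sum_F: "ctensor_sum A R mu k' = (\<Sum>b\<in>bitstrings k'. F k' b)" for k'
    unfolding ctensor_sum_def F_def by simp
  have F0: "F (Suc k) (b @ [0]) = F k b ** R k" if "b \<in> bitstrings k" for b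
  proof -
    have l: "length b = k" using that unfolding bitstrings_def by auto
    show ?thesis unfolding F_def sign_exponent_snoc[OF l] filter_upt_snoc[OF l]
      by (simp add: mprod_append mprod_Cons matrix_mul_assoc)
  qed
  have F1: "F (Suc k) (b @ [1]) = cscale s (A k ** F k b)" if "b \<in> bitstrings k" for b
  proof -
    have l: "length b = k" using that unfolding bitstrings_def by auto
    have sign: "(-1::complex) ^ ((\<Sum>j<k - 1. mu ! j * b ! (j + 1)) + (if k = 0 then 0 else mu ! (k - 1) * 1))
      = s * (-1) ^ (\<Sum>j<k - 1. mu ! j * b ! (j + 1))"
      unfolding s_def by (cases k) (simp_all add: power_add)
    show ?thesis unfolding F_def sign_exponent_snoc[OF l] filter_upt_snoc[OF l] sign
      by (simp add: mprod_append mprod_Cons matrix_mul_assoc)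
  qed
  have inj: "inj_on (\<lambda>(b, x). b @ [x]) (bitstrings k \<times> {0, 1})"
    by (rule inj_onI) auto
  have "ctensor_sum A R mu (Suc k) = (\<Sum>b\<in>bitstrings k. \<Sum>x\<in>{0, 1}. F (Suc k) (b @ [x]))"
    unfolding sum_F bitstrings_Suc sum.reindex[OF inj] sum.cartesian_product by (simp add: case_prod_beta)
  also have "\<dots> = (\<Sum>b\<in>bitstrings k. F k b ** R k + cscale s (A k ** F k b))"
    by (rule sum.cong) (simp_all add: F0 F1[simplified])
  also have "\<dots> = sign_step (A k) (R k) ((0 # mu) ! k) (ctensor_sum A R mu k)"
    unfolding sum_F sign_step_def s_def by (simp add: sum.distrib matrix_sum_mult matrix_mult_sum cscale_sum)
  finally show ?thesis .
qed

lemma ctensor_sum_fold: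
  "ctensor_sum A R mu k = fold (\<lambda>t. sign_step (A t) (R t) ((0 # mu) ! t)) [0..<k] (mat 1)"
proof (induction k)
  case 0
  have "bitstrings 0 = {[]}" unfolding bitstrings_def by auto
  then show ?case unfolding ctensor_sum_def by simp
qed (simp add: ctensor_sum_Suc)

text \<open>A gate (n, q, m) records window, qubit and sign exponent; the sign exponent of the
  first gate is 0 and that of gate j + 1 is mu_j.\<close>

definition window_step :: "(nat \<Rightarrow> cmat2) \<Rightarrow> cmat2 \<Rightarrow> nat \<times> qubit \<times> nat \<Rightarrow> cmat2 \<Rightarrow> cmat2" where
  "window_step U Ot g = (case g of (n, q, m) \<Rightarrow> sign_step (hbar U Ot q n) (htil U q n) m)"

lemma ctensor_fold:
  assumes "length qs = length ns" and "length mu = length ns - 1"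
  shows "ctensor U Ot ns qs mu = fold (window_step U Ot) (zip ns (zip qs (0 # mu))) (mat 1)"
proof -
  define gs where "gs = zip ns (zip qs (0 # mu))"
  have len: "length gs = length ns"
    unfolding gs_def using assms by simp
  have "ctensor U Ot ns qs mu = fold (\<lambda>t. window_step U Ot (gs ! t)) [0..<length gs] (mat 1)"
    unfolding ctensor_eq_ctensor_sum ctensor_sum_fold len
    by (rule fold_cong) (simp_all add: gs_def window_step_def assms)
  also have "\<dots> = fold (window_step U Ot) (map (nth gs) [0..<length gs]) (mat 1)"
    by (simp add: fold_map comp_def)
  also have "\<dots> = fold (window_step U Ot) gs (mat 1)"
    by (simp only: map_nth)
  finally show ?thesis unfolding gs_def .
qed

section \<open>Reducing five steps of one window\<close>

lemma fold_cscale: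
  assumes "\<And>x Y. f x (cscale c Y) = cscale c (f x Y)"
  shows "fold f xs (cscale c X) = cscale c (fold f xs X)"
  by (induction xs arbitrary: X) (simp_all add: assms)

definition block_steps :: "(qubit \<Rightarrow> cmat2) \<Rightarrow> (qubit \<Rightarrow> cmat2) \<Rightarrow> (qubit \<times> nat) list \<Rightarrow> cmat2 \<Rightarrow> cmat2" where
  "block_steps A R bl = fold (\<lambda>(q, m). sign_step (A q) (R q) m) bl"

lemma block_steps_cscale: "block_steps A R bl (cscale c X) = cscale c (block_steps A R bl X)"
  unfolding block_steps_def by (rule fold_cscale) (simp add: sign_step_cscale split: prod.split)

lemma block_steps_zero: "block_steps A R bl 0 = 0"
  using block_steps_cscale[of A R bl 0 0] by simp

lemma block_steps_mset:
  assumes "commuting_involutions A" and "commuting_involutions R" and "mset bl = mset bl'"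
  shows "block_steps A R bl = block_steps A R bl'"
  unfolding block_steps_def
proof (rule fold_multiset_equiv)
  fix x y :: "qubit \<times> nat"
  show "(\<lambda>(q, m). sign_step (A q) (R q) m) x \<circ> (\<lambda>(q, m). sign_step (A q) (R q) m) y =
        (\<lambda>(q, m). sign_step (A q) (R q) m) y \<circ> (\<lambda>(q, m). sign_step (A q) (R q) m) x"
    using assms(1,2) unfolding commuting_involutions_def
    by (cases x; cases y) (simp add: sign_step_commute)
qed (fact assms(3))

lemma block_steps_Cons:
  "block_steps A R ((q, m) # bl) X = block_steps A R bl (sign_step (A q) (R q) m X)"
  unfolding block_steps_def by simp

lemma mset_Cons_remove1: "x \<in> set xs \<Longrightarrow> mset xs = mset (x # remove1 x xs)"
  by simp

lemma block_steps_annihilate: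
  assumes "commuting_involutions A" and "commuting_involutions R"
    and "(q, m) \<in> set bl" and "(q, m') \<in> set bl" and "odd (m + m')"
  shows "block_steps A R bl X = 0"
proof -
  define rest where "rest = remove1 (q, m') (remove1 (q, m) bl)"
  have "m \<noteq> m'" using assms(5) by auto
  then have "(q, m') \<in> set (remove1 (q, m) bl)"
    using assms(4) by simp
  then have "mset (remove1 (q, m) bl) = mset ((q, m') # rest)"
    unfolding rest_def by (rule mset_Cons_remove1)
  then have "mset bl = mset ((q, m) # (q, m') # rest)"
    using mset_Cons_remove1[OF assms(3)] by (simp only: mset.simps)
  then have "block_steps A R bl X = block_steps A R ((q, m) # (q, m') # rest) X"
    using block_steps_mset[OF assms(1,2)] by metis
  also have "\<dots> = block_steps A R rest (sign_step (A q) (R q) m' (sign_step (A q) (R q) m X))"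
    by (simp only: block_steps_Cons)
  also have "\<dots> = 0"
    using assms(1,2,5) unfolding commuting_involutions_def
    by (simp add: sign_step_annihilate add.commute block_steps_zero)
  finally show ?thesis .
qed

lemma block_steps_cube:
  assumes "commuting_involutions A" and "commuting_involutions R"
    and "mset bl = add_mset y (add_mset y (mset T))" and "y \<in> set T"
  shows "block_steps A R bl X = cscale 4 (block_steps A R T X)"
proof -
  obtain q m where y: "y = (q, m)" by fastforce
  define S where "S = sign_step (A q) (R q) m"
  define rest where "rest = remove1 y T"
  have "mset T = mset (y # rest)"
    unfolding rest_def using assms(4) by (rule mset_Cons_remove1)
  then have "mset bl = mset (y # y # y # rest)"
    using assms(3) by simp
  have cube: "S (S (S X)) = cscale 4 (S X)"
    using assms(1,2) unfolding S_def commuting_involutions_def by (simp add: sign_step_cube)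
  have "block_steps A R bl X = block_steps A R (y # y # y # rest) X"
    using block_steps_mset[OF assms(1,2)] \<open>mset bl = mset (y # y # y # rest)\<close> by metis
  also have "\<dots> = cscale 4 (block_steps A R (y # rest) X)"
    by (simp add: block_steps_Cons y S_def[symmetric] cube block_steps_cscale)
  also have "\<dots> = cscale 4 (block_steps A R T X)"
    using block_steps_mset[OF assms(1,2)] \<open>mset T = mset (y # rest)\<close> by metis
  finally show ?thesis .
qed

lemma UNIV_qubit: "(UNIV :: qubit set) = {QA, QB}"
  using qubit.exhaust by auto

lemma five_signed_labels_cases:
  fixes bl :: "(qubit \<times> nat) list"
  assumes "length bl = 5" and "snd ` set bl \<subseteq> {0, 1}"
  obtains (opposite) q m m' where "(q, m) \<in> set bl" and "(q, m') \<in> set bl" and "odd (m + m')"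
    | (triple) y where "3 \<le> count (mset bl) y"
proof (cases "\<exists>q m m'. (q, m) \<in> set bl \<and> (q, m') \<in> set bl \<and> odd (m + m')")
  case True
  then show ?thesis using opposite by blast
next
  case False
  have inj: "inj_on fst (set bl)"
  proof (rule inj_onI)
    fix x y assume x: "x \<in> set bl" and y: "y \<in> set bl" and "fst x = fst y"
    then obtain q a b where xy: "x = (q, a)" "y = (q, b)"
      by (metis prod.collapse)
    have "a \<in> {0, 1}" and "b \<in> {0, 1}"
      using assms(2) x y unfolding xy by force+
    moreover have "\<not> odd (a + b)"
      using False x y unfolding xy by blast
    ultimately show "x = y"
      unfolding xy by auto
  qed
  have "fst ` set bl \<subseteq> {QA, QB}"
    using UNIV_qubit by blast
  then have "card (set bl) \<le> card {QA, QB}"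
    by (rule card_inj_on_le[OF inj]) simp
  then have card_bl: "card (set bl) \<le> 2"
    by simp
  show ?thesis
  proof (rule ccontr)
    assume "\<not> thesis"
    then have few: "\<not> 3 \<le> count (mset bl) y" for y
      using triple by blast
    have "count_list bl y \<le> 2" for y
      using few[of y] by (simp add: count_mset)
    then have "length bl \<le> 2 * card (set bl)"
      using sum_count_set[of bl "set bl"] sum_mono[of "set bl" "count_list bl" "\<lambda>_. 2"] by simp
    with card_bl assms(1) show False by simp
  qed
qed

lemma block_steps_five_reduce:
  assumes "length bl = 5" and "snd ` set bl \<subseteq> {0, 1}"
  obtains T c where "length T = 3" and "hd T = hd bl" and "set T \<subseteq> set bl"
    and "\<And>A R X. commuting_involutions A \<Longrightarrow> commuting_involutions R \<Longrightarrow>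
           block_steps A R bl X = cscale c (block_steps A R T X)"
  using assms
proof (cases rule: five_signed_labels_cases)
  case (opposite q m m')
  show thesis
  proof (rule that[of "take 3 bl" 0])
    show "length (take 3 bl) = 3" and "hd (take 3 bl) = hd bl"
      using assms(1) by (auto simp: hd_take)
    show "set (take 3 bl) \<subseteq> set bl"
      by (rule set_take_subset)
    show "block_steps A R bl X = cscale 0 (block_steps A R (take 3 bl) X)"
      if "commuting_involutions A" and "commuting_involutions R" for A R X
      using block_steps_annihilate[OF that opposite] by simp
  qed
next
  case (triple y)
  define rest where "rest = remove1 y (remove1 y bl)"
  \<comment> \<open>T starts with hd bl: when the run begins at the first gate its sign must stay 0.\<close>
  define T where "T = hd bl # remove1 (hd bl) rest"
  have count_rest: "count (mset rest) x = count (mset bl) x - (if x = y then 2 else 0)" for x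
    unfolding rest_def by (auto simp: numeral_2_eq_2)
  have "hd bl \<in> set bl"
    using assms(1) by (auto intro: hd_in_set)
  then have "0 < count (mset rest) (hd bl)" and "0 < count (mset rest) y"
    using count_mset_gt_0[of "hd bl" bl] triple by (auto simp: count_rest)
  then have "hd bl \<in> set rest" and "y \<in> set rest"
    by (metis count_mset_0_iff not_gr0)+
  then have mset_T: "mset T = mset rest"
    unfolding T_def by simp
  have mset_bl: "mset bl = add_mset y (add_mset y (mset T))"
    using triple unfolding mset_T by (auto simp: multiset_eq_iff count_rest)
  show thesis
  proof (rule that[of T 4])
    show "length T = 3"
      using arg_cong[OF mset_bl, of size] assms(1) by simp
    show "hd T = hd bl"
      unfolding T_def by simp
    show "set T \<subseteq> set bl"
      using arg_cong[OF mset_bl, of set_mset] by auto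
    show "block_steps A R bl X = cscale 4 (block_steps A R T X)"
      if "commuting_involutions A" and "commuting_involutions R" for A R X
      using block_steps_cube[OF that mset_bl] \<open>y \<in> set rest\<close> mset_T
      by (metis set_mset_mset)
  qed
qed

section \<open>Runs of equal windows\<close>

lemma sorted_bounded_consecutive_equal:
  fixes xs :: "nat list"
  assumes "sorted_wrt (\<ge>) xs" and "\<forall>x\<in>set xs. 1 \<le> x \<and> x \<le> L" and "m * L < length xs"
  shows "\<exists>i. i + m < length xs \<and> (\<forall>j\<in>{i..i + m}. xs ! j = xs ! i)"
proof (rule ccontr)
  assume no_run: "\<not> ?thesis"
  have mono: "xs ! j \<le> xs ! i" if "i \<le> j" and "j < length xs" for i j
    using sorted_wrt_nth_less[OF assms(1), of i j] that by (cases "i = j") auto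
  have descent: "xs ! (i + m) < xs ! i" if "i + m < length xs" for i
  proof (rule ccontr)
    assume "\<not> xs ! (i + m) < xs ! i"
    then have "\<forall>j\<in>{i..i + m}. xs ! j = xs ! i"
      using mono[of i] mono[of _ "i + m"] that by (force intro: antisym)
    with no_run that show False by blast
  qed
  have "xs ! (m * t) + t \<le> xs ! 0" if "m * t < length xs" for t
    using that
  proof (induction t)
    case (Suc t)
    then show ?case
      using descent[of "m * t"] by (simp add: add.commute)
  qed simp
  from this[of L] have total_descent: "xs ! (m * L) + L \<le> xs ! 0"
    using assms(3) .
  have "0 < length xs"
    using assms(3) by linarith
  then have "xs ! (m * L) \<in> set xs" and "xs ! 0 \<in> set xs"
    using assms(3) by simp_all
  then have "1 \<le> xs ! (m * L)" and "xs ! 0 \<le> L"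
    using assms(2) by blast+
  with total_descent show False by simp
qed

lemma window_step_cscale: "window_step U Ot g (cscale c X) = cscale c (window_step U Ot g X)"
  unfolding window_step_def by (simp add: sign_step_cscale split: prod.split)

lemma fold_window_step_block:
  "fold (window_step U Ot) (map (Pair n) bl) = block_steps (\<lambda>q. hbar U Ot q n) (\<lambda>q. htil U q n) bl"
  unfolding block_steps_def fold_map window_step_def by (simp add: comp_def)

lemma fold_window_step_replace:
  assumes "\<And>X. block_steps (\<lambda>q. hbar U Ot q n) (\<lambda>q. htil U q n) bl X =
                 cscale c (block_steps (\<lambda>q. hbar U Ot q n) (\<lambda>q. htil U q n) T X)"
  shows "fold (window_step U Ot) (ps @ map (Pair n) bl @ ss) X =
         cscale c (fold (window_step U Ot) (ps @ map (Pair n) T @ ss) X)"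
  by (simp add: fold_window_step_block assms fold_cscale window_step_cscale)

lemma take_drop_eq_replicate:
  assumes "i + m \<le> length xs" and "\<And>j. i \<le> j \<Longrightarrow> j < i + m \<Longrightarrow> xs ! j = x"
  shows "take m (drop i xs) = replicate m x"
  using assms by (intro nth_equalityI) auto

lemma zip_split_replicate:
  assumes "length ys = length xs" and "take m (drop i xs) = replicate m x"
  shows "zip xs ys = take i (zip xs ys) @ map (Pair x) (take m (drop i ys)) @ drop (i + m) (zip xs ys)"
proof -
  have "take m (drop i (zip xs ys)) = map (Pair x) (take m (drop i ys))"
    by (simp add: drop_zip take_zip assms(2) zip_replicate1)
  then show ?thesis
    by (metis append_take_drop_id drop_drop add.commute)
qed

lemma zip_map_fst_snd3: "zip (map fst gs) (zip (map (fst \<circ> snd) gs) (map (snd \<circ> snd) gs)) = gs"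
  by (induction gs) auto

lemma hd_append_middle:
  "ys \<noteq> [] \<Longrightarrow> ys' \<noteq> [] \<Longrightarrow> hd ys = hd ys' \<Longrightarrow> hd (xs @ ys @ zs) = hd (xs @ ys' @ zs')"
  by (cases xs) auto

lemma signed_gates_splice:
  fixes ns :: "nat list" and qs :: "qubit list" and mu :: "nat list"
  defines "signs \<equiv> zip qs (0 # mu)"
  defines "gs \<equiv> zip ns signs"
  assumes len_qs: "length qs = length ns" and len_mu: "length mu = length ns - 1"
    and mu01: "set mu \<subseteq> {0, 1}" and i: "i + 5 \<le> length ns"
    and run: "take 5 (drop i ns) = replicate 5 n"
    and T: "length T = 3" "hd T = hd (take 5 (drop i signs))" "set T \<subseteq> set (take 5 (drop i signs))"
  obtains qs' mu' where "length qs' = length ns - 2" and "length mu' = length ns - 3"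
    and "set mu' \<subseteq> {0, 1}"
    and "zip (take i ns @ drop (i + 2) ns) (zip qs' (0 # mu')) = take i gs @ map (Pair n) T @ drop (i + 5) gs"
proof -
  define bl where "bl = take 5 (drop i signs)"
  define gs' where "gs' = take i gs @ map (Pair n) T @ drop (i + 5) gs"
  have len_signs: "length signs = length ns"
    unfolding signs_def using len_qs len_mu i by simp
  have gs_split: "gs = take i gs @ map (Pair n) bl @ drop (i + 5) gs"
    unfolding gs_def bl_def using zip_split_replicate[OF len_signs run] .
  have "drop i ns = replicate 5 n @ drop (i + 5) ns"
    by (metis append_take_drop_id run drop_drop add.commute)
  then have "drop 2 (drop i ns) = replicate 3 n @ drop (i + 5) ns"
    by simp
  then have "drop (i + 2) ns = replicate 3 n @ drop (i + 5) ns"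
    by (simp add: add.commute)
  then have windows: "map fst gs' = take i ns @ drop (i + 2) ns"
    unfolding gs'_def gs_def using len_signs T(1) by (simp add: comp_def map_replicate_const flip: take_map drop_map)
  have "bl \<noteq> []"
    unfolding bl_def using len_signs i by simp
  then have "hd gs' = hd gs"
    using T(1,2) gs_split unfolding gs'_def bl_def
    by (metis hd_append_middle list.map_disc_iff list.map_sel(1) list.size(3) zero_neq_numeral)
  moreover have "snd (snd (hd gs)) = 0"
    unfolding gs_def signs_def using len_qs i by (cases ns; cases qs) auto
  moreover have "gs' \<noteq> []"
    unfolding gs'_def using T(1) by auto
  ultimately have signs': "0 # tl (map (snd \<circ> snd) gs') = map (snd \<circ> snd) gs'"
    by (cases gs') auto
  have "set gs' \<subseteq> set (take i gs @ map (Pair n) bl @ drop (i + 5) gs)"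
    unfolding gs'_def bl_def using T(3) by auto
  then have "set gs' \<subseteq> set gs"
    using gs_split by simp
  have "snd (snd g) \<in> {0, 1}" if "g \<in> set gs'" for g
  proof -
    obtain a q m where g: "g = (a, q, m)"
      by (cases g) auto
    then have "m \<in> set (0 # mu)"
      using that \<open>set gs' \<subseteq> set gs\<close> unfolding gs_def signs_def by (auto dest!: set_zip_rightD)
    then show ?thesis
      using mu01 g by auto
  qed
  then have "set (map (snd \<circ> snd) gs') \<subseteq> {0, 1}"
    unfolding set_map image_subset_iff comp_def by blast
  then have "set (0 # tl (map (snd \<circ> snd) gs')) \<subseteq> {0, 1}"
    by (simp only: signs')
  then have "set (tl (map (snd \<circ> snd) gs')) \<subseteq> {0, 1}"
    by simp
  show thesis
  proof (rule that)
    show "length (map (fst \<circ> snd) gs') = length ns - 2"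
      and "length (tl (map (snd \<circ> snd) gs')) = length ns - 3"
      unfolding gs'_def gs_def using len_signs i T(1) by simp_all
    show "zip (take i ns @ drop (i + 2) ns) (zip (map (fst \<circ> snd) gs') (0 # tl (map (snd \<circ> snd) gs')))
          = take i gs @ map (Pair n) T @ drop (i + 5) gs"
      unfolding signs' windows[symmetric] zip_map_fst_snd3 by (simp only: gs'_def)
  qed fact
qed

lemma ctensor_reduce_run:
  fixes ns :: "nat list" and qs :: "qubit list" and mu :: "nat list"
  assumes len_qs: "length qs = length ns" and len_mu: "length mu = length ns - 1"
    and mu01: "set mu \<subseteq> {0, 1}" and i: "i + 4 < length ns"
    and run: "\<forall>j\<in>{i..i + 4}. ns ! j = ns ! i"
  shows "\<exists>qs' mu' (c::complex). length qs' = length ns - 2 \<and> length mu' = length ns - 3 \<and>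
     set mu' \<subseteq> {0, 1} \<and>
     (\<forall>U Ot. unitary (U (ns ! i)) \<and> unitary Ot \<longrightarrow>
        ctensor U Ot ns qs mu = cscale c (ctensor U Ot (take i ns @ drop (i + 2) ns) qs' mu'))"
proof -
  let ?signs = "zip qs (0 # mu)"
  let ?gs = "zip ns ?signs"
  let ?ns' = "take i ns @ drop (i + 2) ns"
  define n where "n = ns ! i"
  define bl where "bl = take 5 (drop i ?signs)"
  have len_signs: "length ?signs = length ns"
    using len_qs len_mu i by simp
  have i5: "i + 5 \<le> length ns"
    using i by simp
  have run5: "take 5 (drop i ns) = replicate 5 n"
  proof (rule take_drop_eq_replicate)
    show "i + 5 \<le> length ns"
      by (fact i5)
    show "ns ! j = n" if "i \<le> j" and "j < i + 5" for j
    proof -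
      have "j \<in> {i..i + 4}"
        using that by simp
      then show ?thesis
        using run unfolding n_def by blast
    qed
  qed
  have len_bl: "length bl = 5"
    unfolding bl_def using len_signs i by simp
  have "set bl \<subseteq> set ?signs"
    unfolding bl_def by (meson order_trans set_take_subset set_drop_subset)
  then have "snd ` set bl \<subseteq> set (map snd ?signs)"
    by auto
  also have "\<dots> \<subseteq> set (0 # mu)"
    unfolding map_snd_zip_take by (rule set_take_subset)
  also have "\<dots> \<subseteq> {0, 1}"
    using mu01 by simp
  finally have snd_bl: "snd ` set bl \<subseteq> {0, 1}" .
  obtain T c where T: "length T = 3" "hd T = hd bl" "set T \<subseteq> set bl"
    and reduce: "\<And>A R X. commuting_involutions A \<Longrightarrow> commuting_involutions R \<Longrightarrow>
                   block_steps A R bl X = cscale c (block_steps A R T X)"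
    using block_steps_five_reduce[OF len_bl snd_bl] by blast
  obtain qs' mu' where len': "length qs' = length ns - 2" "length mu' = length ns - 3"
    and mu'01: "set mu' \<subseteq> {0, 1}"
    and gates': "zip ?ns' (zip qs' (0 # mu')) = take i ?gs @ map (Pair n) T @ drop (i + 5) ?gs"
    using signed_gates_splice[OF len_qs len_mu mu01 i5 run5 T[unfolded bl_def]] by blast
  have gs_split: "?gs = take i ?gs @ map (Pair n) bl @ drop (i + 5) ?gs"
    unfolding bl_def by (rule zip_split_replicate[OF len_signs run5])
  have reduced: "ctensor U Ot ns qs mu = cscale c (ctensor U Ot ?ns' qs' mu')"
    if "unitary (U n)" and "unitary Ot" for U Ot
  proof -
    have "ctensor U Ot ns qs mu = fold (window_step U Ot) ?gs (mat 1)"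
      by (rule ctensor_fold[OF len_qs len_mu])
    also have "\<dots> = fold (window_step U Ot) (take i ?gs @ map (Pair n) bl @ drop (i + 5) ?gs) (mat 1)"
      by (rule arg_cong[where f = "\<lambda>gs. fold (window_step U Ot) gs (mat 1)", OF gs_split])
    also have "\<dots> = cscale c (fold (window_step U Ot) (take i ?gs @ map (Pair n) T @ drop (i + 5) ?gs) (mat 1))"
      by (rule fold_window_step_replace,
          rule reduce[OF commuting_involutions_hbar[of U n Ot, OF that] commuting_involutions_htil[of U n, OF that(1)]])
    also have "fold (window_step U Ot) (take i ?gs @ map (Pair n) T @ drop (i + 5) ?gs) (mat 1) =
               ctensor U Ot ?ns' qs' mu'"
      unfolding gates'[symmetric] by (rule ctensor_fold[symmetric]) (use len' i in simp_all)
    finally show ?thesis .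
  qed
  show ?thesis
  proof (intro exI conjI allI impI)
    fix U Ot
    assume "unitary (U (ns ! i)) \<and> unitary Ot"
    then show "ctensor U Ot ns qs mu = cscale c (ctensor U Ot ?ns' qs' mu')"
      using reduced unfolding n_def by blast
  qed (fact len' mu'01)+
qed

theorem mainTheorem4:
  fixes L k :: nat and ns :: "nat list" and qs :: "qubit list" and mu :: "nat list"
  assumes "L \<ge> 1"
    and "k > 4 * L"
    and "length ns = k" and "sorted_wrt (\<ge>) ns" and "\<forall>n\<in>set ns. 1 \<le> n \<and> n \<le> L"
    and "length qs = k"
    and "length mu = k - 1" and "set mu \<subseteq> {0, 1}"
  shows "\<exists>i. i + 4 < k \<and> (\<forall>j\<in>{i..i+4}. ns ! j = ns ! i) \<and>
           (\<exists>qs' mu' (c::complex).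
              length qs' = k - 2 \<and> length mu' = k - 3 \<and> set mu' \<subseteq> {0, 1} \<and>
              (\<forall>U Ot. (\<forall>n\<in>{1..L}. unitary (U n)) \<and> unitary Ot \<and> hermitian Ot \<longrightarrow>
                 ctensor U Ot ns qs mu =
                 cscale c (ctensor U Ot (take i ns @ drop (i + 2) ns) qs' mu')))"
proof -
  obtain i where i: "i + 4 < k" and run: "\<forall>j\<in>{i..i + 4}. ns ! j = ns ! i"
    using sorted_bounded_consecutive_equal[of ns L 4] assms(2-5) by auto
  have window: "ns ! i \<in> {1..L}"
    using assms(3,5) i by simp
  obtain qs' mu' c where len': "length qs' = k - 2" "length mu' = k - 3" and mu'01: "set mu' \<subseteq> {0, 1}"
    and reduced: "\<forall>U Ot. unitary (U (ns ! i)) \<and> unitary Ot \<longrightarrow>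
           ctensor U Ot ns qs mu = cscale c (ctensor U Ot (take i ns @ drop (i + 2) ns) qs' mu')"
    using ctensor_reduce_run[of qs ns mu i] assms(3,6-8) i run by blast
  show ?thesis
  proof (intro exI conjI allI impI)
    fix U Ot
    assume "(\<forall>n\<in>{1..L}. unitary (U n)) \<and> unitary Ot \<and> hermitian Ot"
    then show "ctensor U Ot ns qs mu = cscale c (ctensor U Ot (take i ns @ drop (i + 2) ns) qs' mu')"
      using reduced window by blast
  qed (fact i run len' mu'01)+
qed

end
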